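(* Let $(X,d,\mu)$ be a space of homogeneous type, let $\mathcal{D}$ be a dyadic grid on $X$, let $p(\cdot)\in\mathrm{LH}$ and let $w\in A_{p(\cdot)}$. Then there exists a constant $K$ such that for every $Q\in\mathcal{D}$, \[ \|w\chi_Q\|_{p(\cdot)}\|w^{-1}\chi_Q\|_{p'(\cdot)}\le K\mu(Q). \]
   Context: A space of homogeneous type $(X,d,\mu)$: $X$ nonempty, $d$ a quasi-metric ($d(x,y)=0$ iff $x=y$, symmetric, $d(x,y)\le A_0(d(x,z)+d(z,y))$ for some $A_0\ge1$), $\mu$ a regular measure on the $\sigma$-algebra generated by balls $B(x,r)=\{y:d(x,y)<r\}$ and open sets, with $0<\mu(B(x,2r))\le C_\mu\mu(B(x,r))<\infty$. A dyadic grid on $X$ is a family $\mathcal{D}=\bigcup_{k\in\mathbb{Z}}\mathcal{D}_k$ of subsets of $X$ (cubes), with points $\{x_c(Q)\}_{Q\in\mathcal D}$ and constants $C_d>0$, $d_0>1$, $0<\epsilon<1$, such that: (1) for each $k$ the cubes of $\mathcal D_k$ are pairwise disjoint and cover $X$; (2) any two cubes are either disjoint or one contains the other; (3) each $Q_1\in\mathcal D_k$ contains at least one $Q_2\in\mathcal D_{k-1}$ (a child) and is contained in exactly one $Q_3\in\mathcal D_{k+1}$ (its parent); (4) if $Q_2$ is a child of $Q_1$ then $\mu(Q_2)\ge\epsilon\mu(Q_1)$; (5) for $Q\in\mathcal D_k$, $B(x_c(Q),d_0^k)\subseteq Q\subseteq B(x_c(Q),C_dd_0^k)$. An exponent is a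 measurable $p:X\to[1,\infty]$. With $X_\infty=\{p=\infty\}$, $\rho_{p(\cdot)}(f)=\int_{X\setminus X_\infty}|f(x)|^{p(x)}d\mu+\|f\|_{L^\infty(X_\infty)}$ and $\|f\|_{p(\cdot)}=\inf\{\lambda>0:\rho_{p(\cdot)}(f/\lambda)\le1\}$; $p'(x)=p(x)/(p(x)-1)$ (with $1/0=\infty$, $1/\infty=0$). $p(\cdot)\in\mathrm{LH}_0$ if there is $C_0$ with $|p(x)-p(y)|<-C_0/\log d(x,y)$ whenever $d(x,y)<1/2$; $p(\cdot)\in\mathrm{LH}_\infty$ if there are constants $C_\infty,p_\infty$ with $|p(x)-p_\infty|<C_\infty/\log(e+d(x,x_0))$ for all $x$, for a fixed base point $x_0$; $\mathrm{LH}=\mathrm{LH}_0\cap\mathrm{LH}_\infty$. A weight is a locally integrable $w:X\to[0,\infty]$ with $0<w<\infty$ a.e.; $w\in A_{p(\cdot)}$ means there is $K_0$ with $\|w\chi_B\|_{p(\cdot)}\|w^{-1}\chi_B\|_{p'(\cdot)}\le K_0\mu(B)$ for every ball $B$. *)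

theory Defs
  imports "HOL-Analysis.Analysis"
begin

definition qball :: "('a \<Rightarrow> 'a \<Rightarrow> real) \<Rightarrow> 'a set \<Rightarrow> 'a \<Rightarrow> real \<Rightarrow> 'a set" where
  "qball d X x r = {y \<in> X. d x y < r}"

definition quasi_metric :: "'a set \<Rightarrow> ('a \<Rightarrow> 'a \<Rightarrow> real) \<Rightarrow> real \<Rightarrow> bool" where
  "quasi_metric X d A0 \<longleftrightarrow> A0 \<ge> 1 \<and>
     (\<forall>x\<in>X. \<forall>y\<in>X. d x y \<ge> 0 \<and> (d x y = 0 \<longleftrightarrow> x = y) \<and> d x y = d y x) \<and>
     (\<forall>x\<in>X. \<forall>y\<in>X. \<forall>z\<in>X. d x y \<le> A0 * (d x z + d z y))"

definition qopen :: "('a \<Rightarrow> 'a \<Rightarrow> real) \<Rightarrow> 'a set \<Rightarrow> 'a set \<Rightarrow> bool" where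
  "qopen d X U \<longleftrightarrow> U \<subseteq> X \<and> (\<forall>x\<in>U. \<exists>r>0. qball d X x r \<subseteq> U)"

definition outer_regular :: "('a \<Rightarrow> 'a \<Rightarrow> real) \<Rightarrow> 'a measure \<Rightarrow> bool" where
  "outer_regular d M \<longleftrightarrow> (\<forall>E\<in>sets M.
     emeasure M E = (INF U\<in>{U. U \<in> sets M \<and> qopen d (space M) U \<and> E \<subseteq> U}. emeasure M U))"

definition homogeneous_space :: "('a \<Rightarrow> 'a \<Rightarrow> real) \<Rightarrow> 'a measure \<Rightarrow> bool" where
  "homogeneous_space d M \<longleftrightarrow> space M \<noteq> {} \<and>
     (\<exists>A0. quasi_metric (space M) d A0) \<and>
     sets M = sigma_sets (space M)
        ({qball d (space M) x r | x r. x \<in> space M} \<union> {U. qopen d (space M) U}) \<and>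
     outer_regular d M \<and>
     (\<exists>C\<mu>. \<forall>x\<in>space M. \<forall>r>0.
        0 < emeasure M (qball d (space M) x (2*r)) \<and>
        emeasure M (qball d (space M) x (2*r)) \<le> ennreal C\<mu> * emeasure M (qball d (space M) x r) \<and>
        emeasure M (qball d (space M) x r) < \<infinity>)"

definition dyadic_grid :: "('a \<Rightarrow> 'a \<Rightarrow> real) \<Rightarrow> 'a measure \<Rightarrow> (int \<Rightarrow> 'a set set) \<Rightarrow> ('a set \<Rightarrow> 'a) \<Rightarrow> bool" where
  "dyadic_grid d M D xc \<longleftrightarrow> (\<exists>Cd d0 \<epsilon>. Cd > 0 \<and> d0 > 1 \<and> 0 < \<epsilon> \<and> \<epsilon> < 1 \<and>
     (\<forall>k. D k \<subseteq> sets M) \<and>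
     (\<forall>k. pairwise disjnt (D k) \<and> \<Union>(D k) = space M) \<and>
     (\<forall>Q1\<in>(\<Union>k. D k). \<forall>Q2\<in>(\<Union>k. D k). Q1 \<inter> Q2 = {} \<or> Q1 \<subseteq> Q2 \<or> Q2 \<subseteq> Q1) \<and>
     (\<forall>k. \<forall>Q1\<in>D k. (\<exists>Q2\<in>D (k - 1). Q2 \<subseteq> Q1) \<and> (\<exists>!Q3. Q3 \<in> D (k + 1) \<and> Q1 \<subseteq> Q3)) \<and>
     (\<forall>k. \<forall>Q1\<in>D k. \<forall>Q2\<in>D (k - 1). Q2 \<subseteq> Q1 \<longrightarrow>
          emeasure M Q2 \<ge> ennreal \<epsilon> * emeasure M Q1) \<and>
     (\<forall>k. \<forall>Q\<in>D k. xc Q \<in> space M \<and>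
          qball d (space M) (xc Q) (d0 powr real_of_int k) \<subseteq> Q \<and>
          Q \<subseteq> qball d (space M) (xc Q) (Cd * d0 powr real_of_int k)))"

definition exponent :: "'a measure \<Rightarrow> ('a \<Rightarrow> ereal) \<Rightarrow> bool" where
  "exponent M p \<longleftrightarrow> p \<in> borel_measurable M \<and> (\<forall>x\<in>space M. 1 \<le> p x)"

definition Xinf :: "'a measure \<Rightarrow> ('a \<Rightarrow> ereal) \<Rightarrow> 'a set" where
  "Xinf M p = {x \<in> space M. p x = \<infinity>}"

definition Linf_norm_on :: "'a measure \<Rightarrow> 'a set \<Rightarrow> ('a \<Rightarrow> real) \<Rightarrow> ennreal" where
  "Linf_norm_on M A f = (INF c\<in>{c::ennreal. AE x in M. x \<in> A \<longrightarrow> ennreal \<bar>f x\<bar> \<le> c}. c)"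

definition modular :: "'a measure \<Rightarrow> ('a \<Rightarrow> ereal) \<Rightarrow> ('a \<Rightarrow> real) \<Rightarrow> ennreal" where
  "modular M p f =
     (\<integral>\<^sup>+ x. ennreal (\<bar>f x\<bar> powr real_of_ereal (p x)) * indicator (space M - Xinf M p) x \<partial>M)
     + Linf_norm_on M (Xinf M p) f"

definition var_norm :: "'a measure \<Rightarrow> ('a \<Rightarrow> ereal) \<Rightarrow> ('a \<Rightarrow> real) \<Rightarrow> ennreal" where
  "var_norm M p f = (INF t\<in>{t::real. t > 0 \<and> modular M p (\<lambda>x. f x / t) \<le> 1}. ennreal t)"

definition conj_exp :: "('a \<Rightarrow> ereal) \<Rightarrow> 'a \<Rightarrow> ereal" where
  "conj_exp p x = (if p x = 1 then \<infinity> else if p x = \<infinity> then 1 else p x / (p x - 1))"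

definition LH0 :: "('a \<Rightarrow> 'a \<Rightarrow> real) \<Rightarrow> 'a set \<Rightarrow> ('a \<Rightarrow> ereal) \<Rightarrow> bool" where
  "LH0 d X p \<longleftrightarrow> (\<exists>C0. \<forall>x\<in>X. \<forall>y\<in>X. 0 < d x y \<and> d x y < 1/2 \<longrightarrow>
       \<bar>p x - p y\<bar> < ereal (- C0 / ln (d x y)))"

definition LHinf :: "('a \<Rightarrow> 'a \<Rightarrow> real) \<Rightarrow> 'a set \<Rightarrow> 'a \<Rightarrow> ('a \<Rightarrow> ereal) \<Rightarrow> bool" where
  "LHinf d X x0 p \<longleftrightarrow> (\<exists>Cinf pinf::real. \<forall>x\<in>X.
       \<bar>p x - ereal pinf\<bar> < ereal (Cinf / ln (exp 1 + d x x0)))"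

definition LH :: "('a \<Rightarrow> 'a \<Rightarrow> real) \<Rightarrow> 'a set \<Rightarrow> 'a \<Rightarrow> ('a \<Rightarrow> ereal) \<Rightarrow> bool" where
  "LH d X x0 p \<longleftrightarrow> LH0 d X p \<and> LHinf d X x0 p"

definition weight :: "('a \<Rightarrow> 'a \<Rightarrow> real) \<Rightarrow> 'a measure \<Rightarrow> ('a \<Rightarrow> real) \<Rightarrow> bool" where
  "weight d M w \<longleftrightarrow> w \<in> borel_measurable M \<and> (\<forall>x\<in>space M. 0 \<le> w x) \<and>
     (\<forall>x\<in>space M. \<forall>r. set_integrable M (qball d (space M) x r) w) \<and>
     (AE x in M. 0 < w x)"

definition A_var :: "('a \<Rightarrow> 'a \<Rightarrow> real) \<Rightarrow> 'a measure \<Rightarrow> ('a \<Rightarrow> ereal) \<Rightarrow> ('a \<Rightarrow> real) \<Rightarrow> bool" where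
  "A_var d M p w \<longleftrightarrow> weight d M w \<and>
     (\<exists>K0::real. \<forall>x\<in>space M. \<forall>r.
        var_norm M p (\<lambda>y. w y * indicator (qball d (space M) x r) y)
        * var_norm M (conj_exp p) (\<lambda>y. inverse (w y) * indicator (qball d (space M) x r) y)
        \<le> ennreal K0 * emeasure M (qball d (space M) x r))"

end

theory Submission
  imports Defs
begin

text \<open>Every dyadic cube \<open>Q\<close> is squeezed between two concentric balls
\<open>B(x, r) \<subseteq> Q \<subseteq> B(x, C\<^sub>d r)\<close>. Both norms are monotone in the modulus of the function,
so the \<open>A\<^sub>p\<^sub>(\<^sub>\<cdot>\<^sub>)\<close> condition on the outer ball bounds the product for \<open>Q\<close> by
\<open>K\<^sub>0 \<mu>(B(x, C\<^sub>d r))\<close>; iterating the doubling condition, this is at most a fixed multiple of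
\<open>\<mu>(B(x, r)) \<le> \<mu>(Q)\<close>.\<close>

lemma modular_mono:
  assumes "\<And>x. \<bar>f x\<bar> \<le> \<bar>g x\<bar>" and "\<forall>x\<in>space M. 1 \<le> p x"
  shows "modular M p f \<le> modular M p g"
proof -
  have "(\<integral>\<^sup>+ x. ennreal (\<bar>f x\<bar> powr real_of_ereal (p x)) * indicator (space M - Xinf M p) x \<partial>M)
     \<le> (\<integral>\<^sup>+ x. ennreal (\<bar>g x\<bar> powr real_of_ereal (p x)) * indicator (space M - Xinf M p) x \<partial>M)"
  proof (rule nn_integral_mono)
    fix x assume "x \<in> space M"
    show "ennreal (\<bar>f x\<bar> powr real_of_ereal (p x)) * indicator (space M - Xinf M p) x
      \<le> ennreal (\<bar>g x\<bar> powr real_of_ereal (p x)) * indicator (space M - Xinf M p) x"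
    proof (cases "x \<in> space M - Xinf M p")
      case True
      then have "0 \<le> real_of_ereal (p x)"
        using assms(2) by (cases "p x") auto
      then have "\<bar>f x\<bar> powr real_of_ereal (p x) \<le> \<bar>g x\<bar> powr real_of_ereal (p x)"
        using assms(1) by (simp add: powr_mono2)
      then show ?thesis using True by (simp add: ennreal_leI)
    qed simp
  qed
  moreover have "Linf_norm_on M (Xinf M p) f \<le> Linf_norm_on M (Xinf M p) g"
    unfolding Linf_norm_on_def
  proof (rule INF_superset_mono)
    show "{c. AE x in M. x \<in> Xinf M p \<longrightarrow> ennreal \<bar>g x\<bar> \<le> c}
      \<subseteq> {c. AE x in M. x \<in> Xinf M p \<longrightarrow> ennreal \<bar>f x\<bar> \<le> c}"
    proof (intro subsetI CollectI, drule CollectD)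
      fix c assume "AE x in M. x \<in> Xinf M p \<longrightarrow> ennreal \<bar>g x\<bar> \<le> c"
      then show "AE x in M. x \<in> Xinf M p \<longrightarrow> ennreal \<bar>f x\<bar> \<le> c"
        by eventually_elim (meson assms(1) ennreal_leI order_trans)
    qed
  qed simp
  ultimately show ?thesis unfolding modular_def by (rule add_mono)
qed

lemma var_norm_mono:
  assumes "\<And>x. \<bar>f x\<bar> \<le> \<bar>g x\<bar>" and "\<forall>x\<in>space M. 1 \<le> p x"
  shows "var_norm M p f \<le> var_norm M p g"
  unfolding var_norm_def
proof (rule INF_superset_mono)
  show "{t. 0 < t \<and> modular M p (\<lambda>x. g x / t) \<le> 1} \<subseteq> {t. 0 < t \<and> modular M p (\<lambda>x. f x / t) \<le> 1}"
  proof (intro subsetI CollectI, drule CollectD, elim conjE)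
    fix t :: real assume "0 < t" and g_le: "modular M p (\<lambda>x. g x / t) \<le> 1"
    have "modular M p (\<lambda>x. f x / t) \<le> modular M p (\<lambda>x. g x / t)"
      using \<open>0 < t\<close> assms by (intro modular_mono) (simp_all add: divide_right_mono)
    with \<open>0 < t\<close> g_le show "0 < t \<and> modular M p (\<lambda>x. f x / t) \<le> 1" by simp
  qed
qed simp

lemma one_le_conj_exp:
  assumes "1 \<le> p x" shows "1 \<le> conj_exp p x"
proof (cases "p x")
  case (real r)
  show ?thesis
  proof (cases "r = 1")
    case False
    with assms real have "1 < r" by auto
    then have "1 \<le> r / (r - 1)" by (simp add: field_simps)
    moreover have "ereal r - 1 = ereal (r - 1)" by (simp add: one_ereal_def)
    ultimately show ?thesis using real False unfolding conj_exp_def by simp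
  qed (simp add: conj_exp_def real)
qed (use assms in \<open>auto simp: conj_exp_def\<close>)

lemma qball_mono: "r \<le> s \<Longrightarrow> qball d X x r \<subseteq> qball d X x s"
  unfolding qball_def by auto

lemma A_var_subset_qball:
  assumes "A_var d M p w" and "exponent M p"
  obtains K0 where "0 \<le> K0"
    and "\<And>x r Q. x \<in> space M \<Longrightarrow> Q \<subseteq> qball d (space M) x r \<Longrightarrow>
           var_norm M p (\<lambda>y. w y * indicator Q y)
           * var_norm M (conj_exp p) (\<lambda>y. inverse (w y) * indicator Q y)
           \<le> ennreal K0 * emeasure M (qball d (space M) x r)"
proof -
  have p_ge: "\<forall>x\<in>space M. 1 \<le> p x"
    using assms(2) unfolding exponent_def by simp
  then have p'_ge: "\<forall>x\<in>space M. 1 \<le> conj_exp p x"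
    by (simp add: one_le_conj_exp)
  obtain K0 where K0: "\<And>x r. x \<in> space M \<Longrightarrow>
        var_norm M p (\<lambda>y. w y * indicator (qball d (space M) x r) y)
        * var_norm M (conj_exp p) (\<lambda>y. inverse (w y) * indicator (qball d (space M) x r) y)
        \<le> ennreal K0 * emeasure M (qball d (space M) x r)"
    using assms(1) unfolding A_var_def by blast
  show thesis
  proof (rule that[of "max 0 K0"])
    fix x r Q assume x: "x \<in> space M" and Q: "Q \<subseteq> qball d (space M) x r"
    let ?B = "qball d (space M) x r"
    have "var_norm M p (\<lambda>y. w y * indicator Q y)
           * var_norm M (conj_exp p) (\<lambda>y. inverse (w y) * indicator Q y)
       \<le> var_norm M p (\<lambda>y. w y * indicator ?B y)
           * var_norm M (conj_exp p) (\<lambda>y. inverse (w y) * indicator ?B y)"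
      using Q by (intro mult_mono var_norm_mono p_ge p'_ge)
        (auto simp: indicator_def abs_mult)
    also have "\<dots> \<le> ennreal K0 * emeasure M ?B" using K0 x .
    also have "\<dots> \<le> ennreal (max 0 K0) * emeasure M ?B"
      by (intro mult_right_mono ennreal_leI) simp_all
    finally show "var_norm M p (\<lambda>y. w y * indicator Q y)
           * var_norm M (conj_exp p) (\<lambda>y. inverse (w y) * indicator Q y)
           \<le> ennreal (max 0 K0) * emeasure M ?B" .
  qed simp
qed

lemma iterated_doubling:
  fixes m :: "real \<Rightarrow> ennreal"
  assumes "\<And>r. 0 < r \<Longrightarrow> m (2 * r) \<le> ennreal C * m r" and "0 \<le> C" and "0 < r"
  shows "m (2 ^ n * r) \<le> ennreal (C ^ n) * m r"
proof (induction n)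
  case (Suc n)
  have "m (2 ^ Suc n * r) = m (2 * (2 ^ n * r))" by (simp add: mult.assoc)
  also have "\<dots> \<le> ennreal C * m (2 ^ n * r)" using assms by simp
  also have "\<dots> \<le> ennreal C * (ennreal (C ^ n) * m r)" using Suc by (simp add: mult_left_mono)
  also have "\<dots> = ennreal (C ^ Suc n) * m r" using assms(2) by (simp add: ennreal_mult mult.assoc)
  finally show ?case .
qed simp

lemma homogeneous_space_qball_sets:
  "homogeneous_space d M \<Longrightarrow> x \<in> space M \<Longrightarrow> qball d (space M) x r \<in> sets M"
  unfolding homogeneous_space_def by (auto intro: sigma_sets.Basic)

lemma homogeneous_space_emeasure_qball_scale:
  assumes "homogeneous_space d M"
  obtains C where "0 \<le> C"
    and "\<And>x r. x \<in> space M \<Longrightarrow> 0 < r \<Longrightarrow>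
           emeasure M (qball d (space M) x (\<Lambda> * r)) \<le> ennreal C * emeasure M (qball d (space M) x r)"
proof -
  obtain C\<mu> where doubling: "\<And>x r. x \<in> space M \<Longrightarrow> 0 < r \<Longrightarrow>
        emeasure M (qball d (space M) x (2 * r)) \<le> ennreal C\<mu> * emeasure M (qball d (space M) x r)"
    using assms unfolding homogeneous_space_def by blast
  have doubling': "emeasure M (qball d (space M) x (2 * r))
      \<le> ennreal (max 0 C\<mu>) * emeasure M (qball d (space M) x r)" if "x \<in> space M" "0 < r" for x r
    using doubling[OF that] by (cases "0 \<le> C\<mu>") (auto simp: max_def ennreal_neg)
  obtain N :: nat where N: "\<Lambda> < 2 ^ N" using real_arch_pow[of 2 \<Lambda>] by auto
  show thesis
  proof (rule that[of "max 0 C\<mu> ^ N"])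
    fix x and r :: real assume x: "x \<in> space M" and r: "0 < r"
    have "emeasure M (qball d (space M) x (\<Lambda> * r)) \<le> emeasure M (qball d (space M) x (2 ^ N * r))"
      using N r assms x
      by (intro emeasure_mono qball_mono homogeneous_space_qball_sets) simp_all
    also have "\<dots> \<le> ennreal (max 0 C\<mu> ^ N) * emeasure M (qball d (space M) x r)"
      using doubling' x r by (intro iterated_doubling) simp_all
    finally show "emeasure M (qball d (space M) x (\<Lambda> * r))
        \<le> ennreal (max 0 C\<mu> ^ N) * emeasure M (qball d (space M) x r)" .
  qed simp
qed

lemma dyadic_grid_cube_between_qballs:
  assumes "dyadic_grid d M D xc"
  obtains \<Lambda> where "\<And>k Q. Q \<in> D k \<Longrightarrow> Q \<in> sets M \<and> (\<exists>x\<in>space M. \<exists>r>0.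
           qball d (space M) x r \<subseteq> Q \<and> Q \<subseteq> qball d (space M) x (\<Lambda> * r))"
proof -
  from assms obtain Cd d0 where "1 < d0" and sets: "\<forall>k. D k \<subseteq> sets M"
    and balls: "\<forall>k. \<forall>Q\<in>D k. xc Q \<in> space M \<and>
          qball d (space M) (xc Q) (d0 powr real_of_int k) \<subseteq> Q \<and>
          Q \<subseteq> qball d (space M) (xc Q) (Cd * d0 powr real_of_int k)"
    unfolding dyadic_grid_def by (elim exE conjE) (rule that)
  show thesis
  proof (rule that[of Cd])
    fix k Q assume Q: "Q \<in> D k"
    have "0 < d0 powr real_of_int k" using \<open>1 < d0\<close> by simp
    with Q sets balls show "Q \<in> sets M \<and> (\<exists>x\<in>space M. \<exists>r>0.
           qball d (space M) x r \<subseteq> Q \<and> Q \<subseteq> qball d (space M) x (Cd * r))"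
      by blast
  qed
qed

theorem lemma4p2:
  fixes d :: "'a \<Rightarrow> 'a \<Rightarrow> real" and M :: "'a measure"
    and D :: "int \<Rightarrow> 'a set set" and xc :: "'a set \<Rightarrow> 'a"
    and p :: "'a \<Rightarrow> ereal" and w :: "'a \<Rightarrow> real" and x0 :: 'a
  assumes "homogeneous_space d M"
    and "dyadic_grid d M D xc"
    and "exponent M p"
    and "x0 \<in> space M"
    and "LH d (space M) x0 p"
    and "A_var d M p w"
  shows "\<exists>K::real. \<forall>k. \<forall>Q\<in>D k.
           var_norm M p (\<lambda>y. w y * indicator Q y)
           * var_norm M (conj_exp p) (\<lambda>y. inverse (w y) * indicator Q y)
           \<le> ennreal K * emeasure M Q"
proof -
  obtain \<Lambda> where cube: "\<And>k Q. Q \<in> D k \<Longrightarrow> Q \<in> sets M \<and> (\<exists>x\<in>space M. \<exists>r>0.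
           qball d (space M) x r \<subseteq> Q \<and> Q \<subseteq> qball d (space M) x (\<Lambda> * r))"
    using dyadic_grid_cube_between_qballs[OF assms(2)] by blast
  obtain K0 where "0 \<le> K0" and A_bound: "\<And>x r Q. x \<in> space M \<Longrightarrow> Q \<subseteq> qball d (space M) x r \<Longrightarrow>
           var_norm M p (\<lambda>y. w y * indicator Q y)
           * var_norm M (conj_exp p) (\<lambda>y. inverse (w y) * indicator Q y)
           \<le> ennreal K0 * emeasure M (qball d (space M) x r)"
    using A_var_subset_qball[OF assms(6,3)] by blast
  obtain C where "0 \<le> C" and scale: "\<And>x r. x \<in> space M \<Longrightarrow> 0 < r \<Longrightarrow>
           emeasure M (qball d (space M) x (\<Lambda> * r)) \<le> ennreal C * emeasure M (qball d (space M) x r)"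
    using homogeneous_space_emeasure_qball_scale[OF assms(1)] by blast
  show ?thesis
  proof (intro exI allI ballI)
  fix k Q assume "Q \<in> D k"
  then obtain x r where "Q \<in> sets M" "x \<in> space M" "0 < r"
    and inner: "qball d (space M) x r \<subseteq> Q" and outer: "Q \<subseteq> qball d (space M) x (\<Lambda> * r)"
    using cube by blast
  have "var_norm M p (\<lambda>y. w y * indicator Q y)
           * var_norm M (conj_exp p) (\<lambda>y. inverse (w y) * indicator Q y)
        \<le> ennreal K0 * emeasure M (qball d (space M) x (\<Lambda> * r))"
    using A_bound \<open>x \<in> space M\<close> outer .
  also have "\<dots> \<le> ennreal K0 * (ennreal C * emeasure M (qball d (space M) x r))"
    using scale[OF \<open>x \<in> space M\<close> \<open>0 < r\<close>] by (rule mult_left_mono) simp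
  also have "\<dots> \<le> ennreal K0 * (ennreal C * emeasure M Q)"
    using inner \<open>Q \<in> sets M\<close> by (intro mult_left_mono emeasure_mono) simp_all
  also have "\<dots> = ennreal (K0 * C) * emeasure M Q"
    using \<open>0 \<le> K0\<close> \<open>0 \<le> C\<close> by (simp add: ennreal_mult mult.assoc)
  finally show "var_norm M p (\<lambda>y. w y * indicator Q y)
           * var_norm M (conj_exp p) (\<lambda>y. inverse (w y) * indicator Q y)
        \<le> ennreal (K0 * C) * emeasure M Q" .
  qed
qed

end
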